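(* Let $p\ge 3$ be an integer, $w=2\cos(\pi/p)$, and for real $S$ set $$X_S=\begin{pmatrix}0&-e^{S/2}\\ e^{-S/2}&0\end{pmatrix},\quad R=\begin{pmatrix}1&1\\-1&0\end{pmatrix},\quad L=\begin{pmatrix}0&1\\-1&-1\end{pmatrix},\quad F_p=\begin{pmatrix}0&1\\-1&-w\end{pmatrix}.$$ Let $Z\in\mathbb R$ and define $e^{Z_1}=e^Z\frac{\sin(2\pi/p)}{\sin(\pi/p)}$, $e^{Z_p}=e^Z\frac{\sin(\pi/p)}{\sin(2\pi/p)}$, $e^{Z_k}=e^Z\frac{\sin((k-1)\pi/p)}{\sin(k\pi/p)}$ for $k=2,\dots,p-1$, and $e^{Y_k}=\frac{\sin((k+1)\pi/p)}{\sin((k-1)\pi/p)}$ for $k=2,\dots,p-2$. Then $$X_ZF_pX_Z=X_{Z_1}LX_{Z_2},$$ for every $k=2,\dots,p-2$ $$X_Z(-1)^{k-1}F_p^{k}X_Z=X_{Z_1}RX_{Y_2}R\cdots RX_{Y_k}LX_{Z_{k+1}},$$ and $$X_Z(-1)^{p}F_p^{p-1}X_Z=X_{Z_1}RX_{Y_2}R\cdots RX_{Y_{p-2}}RX_{Z_p}$$ (for $p=3$ the right-hand side of the last identity is $X_{Z_1}RX_{Z_3}$). *)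

theory Defs
  imports "HOL-Analysis.Analysis"
begin

definition mat2 :: "real \<Rightarrow> real \<Rightarrow> real \<Rightarrow> real \<Rightarrow> real^2^2" where
  "mat2 a b c d = vector [vector [a, b], vector [c, d]]"

fun mpow :: "real^2^2 \<Rightarrow> nat \<Rightarrow> real^2^2" where
  "mpow A 0 = mat 1"
| "mpow A (Suc n) = A ** mpow A n"

definition Xm :: "real \<Rightarrow> real^2^2" where
  "Xm S = mat2 0 (- exp (S/2)) (exp (- S/2)) 0"

definition Rm :: "real^2^2" where "Rm = mat2 1 1 (-1) 0"
definition Lm :: "real^2^2" where "Lm = mat2 0 1 (-1) (-1)"

definition wp :: "nat \<Rightarrow> real" where "wp p = 2 * cos (pi / real p)"

definition Fm :: "nat \<Rightarrow> real^2^2" where "Fm p = mat2 0 1 (-1) (- wp p)"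

definition Zk :: "nat \<Rightarrow> real \<Rightarrow> nat \<Rightarrow> real" where
  "Zk p Z k =
     (if k = 1 then Z + ln (sin (2*pi/real p) / sin (pi/real p))
      else if k = p then Z + ln (sin (pi/real p) / sin (2*pi/real p))
      else Z + ln (sin (real (k-1)*pi/real p) / sin (real k*pi/real p)))"

definition Yk :: "nat \<Rightarrow> nat \<Rightarrow> real" where
  "Yk p k = ln (sin (real (k+1)*pi/real p) / sin (real (k-1)*pi/real p))"

text \<open>The ordered product R X_{Y_2} R X_{Y_3} ... R X_{Y_k} (identity if k < 2).\<close>
definition chainRY :: "nat \<Rightarrow> nat \<Rightarrow> real^2^2" where
  "chainRY p k = foldr (\<lambda>j acc. (Rm ** Xm (Yk p j)) ** acc) [2..<Suc k] (mat 1)"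

end

theory Submission
  imports Defs
begin

(* Write s_j = sin (j pi / p); then w s_(j+1) = s_j + s_(j+2), s_0 = s_p = 0 and s_(p-j) = s_j.
   Since X_Z X_Z = -1, the left-hand sides G_k = X_Z (-1)^(k-1) F_p^k X_Z satisfy
   G_(k+1) = G_k (X_Z F_p X_Z), while the right-hand sides grow by replacing the tail
   L X_(Z_(k+1)) with R X_(Y_(k+1)) L X_(Z_(k+2)).  So all three identities follow by induction on k
   from three local 2x2 identities (start, step, and the final step, where s_p = 0 turns L into R),
   each a direct computation using only the three-term recurrence. *)

lemma mat2_nth:
  "mat2 a b c d $ 1 $ 1 = a" "mat2 a b c d $ 1 $ 2 = b"
  "mat2 a b c d $ 2 $ 1 = c" "mat2 a b c d $ 2 $ 2 = d"
  by (simp_all add: mat2_def)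

lemma mat2_eq_iff: "mat2 a b c d = mat2 a' b' c' d' \<longleftrightarrow> a = a' \<and> b = b' \<and> c = c' \<and> d = d'"
  by (metis mat2_nth)

lemma mat2_mult:
  "mat2 a b c d ** mat2 a' b' c' d'
     = mat2 (a*a' + b*c') (a*b' + b*d') (c*a' + d*c') (c*b' + d*d')"
  by (simp add: vec_eq_iff forall_2 matrix_matrix_mult_def sum_2 mat2_nth)

lemma mat_1_eq_mat2: "mat 1 = mat2 1 0 0 1"
  by (simp add: vec_eq_iff forall_2 mat2_nth mat_def)

lemma uminus_mat2: "- mat2 a b c d = mat2 (-a) (-b) (-c) (-d)"
  by (simp add: vec_eq_iff forall_2 mat2_nth)

lemma mpow_Suc_right: "mpow A (Suc n) = mpow A n ** A"
  by (induction n) (simp_all add: matrix_mul_assoc)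

lemma Xm_eq_mat2: "exp (S/2) = x \<Longrightarrow> Xm S = mat2 0 (- x) (1/x) 0"
  by (auto simp: Xm_def exp_minus field_simps)

lemma Xm_mult_Xm_self: "Xm S ** Xm S = - mat 1"
  unfolding Xm_eq_mat2[OF refl] mat2_mult mat_1_eq_mat2 uminus_mat2 by simp

lemma matrix_mul_uminus_left: "(- A) ** B = - (A ** B :: real^'n^'m)"
  using scalar_matrix_assoc[of "-1" A B] by simp

lemma matrix_mul_uminus_right: "A ** (- B) = - (A ** B :: real^'n^'m)"
  using matrix_scalar_ac[of A "-1" B] by (simp add: matrix_mul_uminus_left)

lemma matrix_mul_scaleR_middle: "A ** (c *\<^sub>R B) ** C = c *\<^sub>R (A ** B ** C :: real^'n^'n)"
  by (simp add: matrix_scalar_ac scalar_matrix_assoc)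

lemma sign_mpow_Suc_conj:
  assumes "X ** X = - mat 1" and "1 \<le> k"
  shows "X ** ((-1) ^ k *\<^sub>R mpow A (Suc k)) ** X
       = (X ** ((-1) ^ (k - 1) *\<^sub>R mpow A k) ** X) ** (X ** A ** X)"
proof -
  have sign: "(-1::real) ^ k = - ((-1) ^ (k - 1))"
    using \<open>1 \<le> k\<close> by (cases k) simp_all
  have "X ** mpow A k ** X ** (X ** A ** X) = X ** mpow A k ** (X ** X) ** A ** X"
    by (simp add: matrix_mul_assoc)
  also have "\<dots> = - (X ** mpow A (Suc k) ** X)"
    unfolding assms(1) mpow_Suc_right matrix_mul_uminus_right matrix_mul_uminus_left
    by (simp add: matrix_mul_assoc)
  finally show ?thesis
    unfolding matrix_mul_scaleR_middle scalar_matrix_assoc[symmetric] sign by simp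
qed

lemma Xm_add_ln_squares:
  assumes "0 < x" "0 < y"
  shows "Xm (Z + ln (x\<^sup>2 / y\<^sup>2))
       = mat2 0 (- (exp (Z/2) * x / y)) (y / (exp (Z/2) * x)) 0"
proof -
  have "ln (x\<^sup>2 / y\<^sup>2) / 2 = ln (x / y)"
    using assms by (simp add: power_divide[symmetric] ln_realpow)
  then have "exp ((Z + ln (x\<^sup>2 / y\<^sup>2)) / 2) = exp (Z/2) * x / y"
    using assms by (simp add: add_divide_distrib exp_add)
  then show ?thesis
    by (simp add: Xm_eq_mat2)
qed

lemma Xm_ln_squares:
  "0 < x \<Longrightarrow> 0 < y \<Longrightarrow> Xm (ln (x\<^sup>2 / y\<^sup>2)) = mat2 0 (- (x / y)) (y / x) 0"
  using Xm_add_ln_squares[of x y 0] by simp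

lemma Xm_conj_companion_base:
  assumes "0 < a" "0 < b" "w * a = b"
  shows "Xm Z ** mat2 0 1 (-1) (-w) ** Xm Z
       = Xm (Z + ln (b/a)) ** Lm ** Xm (Z + ln (a/b))"
proof -
  obtain x y where "0 < x" "0 < y" and ab: "a = x\<^sup>2" "b = y\<^sup>2"
    using assms by (metis real_sqrt_gt_0_iff real_sqrt_pow2 less_imp_le)
  then show ?thesis
    unfolding ab Xm_add_ln_squares[OF \<open>0 < x\<close> \<open>0 < y\<close>]
      Xm_add_ln_squares[OF \<open>0 < y\<close> \<open>0 < x\<close>]
      Xm_eq_mat2[OF refl, of Z] Lm_def mat2_mult mat2_eq_iff
    using assms(3) ab by (simp add: field_simps power2_eq_square)
qed

lemma Xm_conj_companion_step:
  assumes "0 < a" "0 < b" "0 < c" "w * b = a + c"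
  shows "Lm ** Xm (Z + ln (a/b)) ** (Xm Z ** mat2 0 1 (-1) (-w) ** Xm Z)
       = Rm ** Xm (ln (c/a)) ** Lm ** Xm (Z + ln (b/c))"
proof -
  obtain x y z where "0 < x" "0 < y" "0 < z" and abc: "a = x\<^sup>2" "b = y\<^sup>2" "c = z\<^sup>2"
    using assms by (metis real_sqrt_gt_0_iff real_sqrt_pow2 less_imp_le)
  show ?thesis
    unfolding abc Xm_add_ln_squares[OF \<open>0 < x\<close> \<open>0 < y\<close>]
      Xm_add_ln_squares[OF \<open>0 < y\<close> \<open>0 < z\<close>]
      Xm_ln_squares[OF \<open>0 < z\<close> \<open>0 < x\<close>]
      Xm_eq_mat2[OF refl, of Z] Lm_def Rm_def mat2_mult mat2_eq_iff
    using \<open>0 < x\<close> \<open>0 < y\<close> \<open>0 < z\<close> assms(4)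
    by (simp add: field_simps power2_eq_square abc) algebra
qed

lemma Xm_conj_companion_last:
  assumes "0 < a" "0 < b" "w * b = a"
  shows "Lm ** Xm (Z + ln (a/b)) ** (Xm Z ** mat2 0 1 (-1) (-w) ** Xm Z)
       = Rm ** Xm (Z + ln (b/a))"
proof -
  obtain x y where "0 < x" "0 < y" and ab: "a = x\<^sup>2" "b = y\<^sup>2"
    using assms by (metis real_sqrt_gt_0_iff real_sqrt_pow2 less_imp_le)
  then show ?thesis
    unfolding ab Xm_add_ln_squares[OF \<open>0 < x\<close> \<open>0 < y\<close>]
      Xm_add_ln_squares[OF \<open>0 < y\<close> \<open>0 < x\<close>]
      Xm_eq_mat2[OF refl, of Z] Lm_def Rm_def mat2_mult mat2_eq_iff
    using assms(3) ab by (simp add: field_simps power2_eq_square)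
qed

definition sin_frac :: "nat \<Rightarrow> nat \<Rightarrow> real" where
  "sin_frac p j = sin (real j * pi / real p)"

lemma sin_Suc_Suc_add_sin:
  "sin (real (Suc (Suc n)) * t) + sin (real n * t) = 2 * cos t * sin (real (Suc n) * t)"
proof -
  have "real (Suc (Suc n)) * t = real (Suc n) * t + t" "real n * t = real (Suc n) * t - t"
    by (simp_all add: algebra_simps)
  then show ?thesis
    by (simp add: sin_add sin_diff)
qed

lemma wp_mult_sin_frac: "wp p * sin_frac p (Suc n) = sin_frac p (Suc (Suc n)) + sin_frac p n"
  using sin_Suc_Suc_add_sin[of n "pi / real p"] by (simp add: wp_def sin_frac_def)

lemma sin_frac_pos: "0 < j \<Longrightarrow> j < p \<Longrightarrow> 0 < sin_frac p j"
  unfolding sin_frac_def by (rule sin_gt_zero) (auto simp: field_simps)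

lemma sin_frac_reflect: "j \<le> p \<Longrightarrow> sin_frac p (p - j) = sin_frac p j"
proof (cases "p = 0")
  case False
  assume "j \<le> p"
  then have "real (p - j) * pi / real p = pi - real j * pi / real p"
    using False by (simp add: of_nat_diff field_simps)
  then show ?thesis
    by (simp add: sin_frac_def)
qed simp

lemma Zk_eq_sin_frac:
  "2 \<le> k \<Longrightarrow> k < p \<Longrightarrow> Zk p Z k = Z + ln (sin_frac p (k - 1) / sin_frac p k)"
  by (simp add: Zk_def sin_frac_def)

lemma Zk_1_eq_sin_frac: "p \<noteq> 1 \<Longrightarrow> Zk p Z 1 = Z + ln (sin_frac p 2 / sin_frac p 1)"
  by (simp add: Zk_def sin_frac_def)

lemma Zk_self_eq_sin_frac: "p \<noteq> 1 \<Longrightarrow> Zk p Z p = Z + ln (sin_frac p 1 / sin_frac p 2)"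
  by (simp add: Zk_def sin_frac_def)

lemma Yk_eq_sin_frac: "Yk p k = ln (sin_frac p (k + 1) / sin_frac p (k - 1))"
  by (simp add: Yk_def sin_frac_def)

lemma conj_Fm_base:
  assumes "3 \<le> p"
  shows "Xm Z ** Fm p ** Xm Z = Xm (Zk p Z 1) ** Lm ** Xm (Zk p Z 2)"
proof -
  have "Zk p Z 1 = Z + ln (sin_frac p 2 / sin_frac p 1)"
    using assms by (intro Zk_1_eq_sin_frac) simp
  moreover have "Zk p Z 2 = Z + ln (sin_frac p 1 / sin_frac p 2)"
    using assms Zk_eq_sin_frac[of 2 p Z] by simp
  moreover have "wp p * sin_frac p 1 = sin_frac p 2"
    using wp_mult_sin_frac[of p 0] by (simp add: sin_frac_def numeral_2_eq_2)
  ultimately show ?thesis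
    unfolding Fm_def using assms by (simp add: Xm_conj_companion_base sin_frac_pos)
qed

lemma conj_Fm_step:
  assumes "1 \<le> k" "k + 2 < p"
  shows "Lm ** Xm (Zk p Z (k + 1)) ** (Xm Z ** Fm p ** Xm Z)
       = Rm ** Xm (Yk p (k + 1)) ** Lm ** Xm (Zk p Z (k + 2))"
proof -
  have "Zk p Z (k + 1) = Z + ln (sin_frac p k / sin_frac p (k + 1))"
    "Zk p Z (k + 2) = Z + ln (sin_frac p (k + 1) / sin_frac p (k + 2))"
    "Yk p (k + 1) = ln (sin_frac p (k + 2) / sin_frac p k)"
    using assms by (simp_all add: Zk_eq_sin_frac Yk_eq_sin_frac)
  moreover have "wp p * sin_frac p (k + 1) = sin_frac p k + sin_frac p (k + 2)"
    using wp_mult_sin_frac[of p k] by simp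
  ultimately show ?thesis
    unfolding Fm_def using assms by (simp add: Xm_conj_companion_step sin_frac_pos)
qed

lemma conj_Fm_last:
  assumes "3 \<le> p"
  shows "Lm ** Xm (Zk p Z (p - 1)) ** (Xm Z ** Fm p ** Xm Z) = Rm ** Xm (Zk p Z p)"
proof -
  have "Zk p Z (p - 1) = Z + ln (sin_frac p (p - 2) / sin_frac p (p - 1))"
    using assms Zk_eq_sin_frac[of "p - 1" p Z] by (simp add: numeral_2_eq_2)
  moreover have "Zk p Z p = Z + ln (sin_frac p (p - 1) / sin_frac p (p - 2))"
    using assms by (simp add: Zk_self_eq_sin_frac sin_frac_reflect)
  moreover have "wp p * sin_frac p (p - 1) = sin_frac p (p - 2)"
  proof -
    have "wp p * sin_frac p (p - 1) = sin_frac p p + sin_frac p (p - 2)"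
      using wp_mult_sin_frac[of p "p - 2"] assms by (simp add: numeral_2_eq_2 Suc_diff_Suc)
    moreover have "sin_frac p p = 0"
      using sin_frac_reflect[of 0 p] by (simp add: sin_frac_def)
    ultimately show ?thesis
      by simp
  qed
  moreover have "0 < sin_frac p (p - 2)" "0 < sin_frac p (p - 1)"
    using assms by (simp_all add: sin_frac_pos)
  ultimately show ?thesis
    unfolding Fm_def by (simp only: Xm_conj_companion_last)
qed

lemma foldr_matrix_mult:
  "foldr (\<lambda>j M. f j ** M) xs B = foldr (\<lambda>j M. f j ** M) xs (mat 1) ** (B :: real^'n^'n)"
  by (induction xs) (simp_all add: matrix_mul_assoc)

lemma chainRY_Suc: "1 \<le> k \<Longrightarrow> chainRY p (Suc k) = chainRY p k ** (Rm ** Xm (Yk p (Suc k)))"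
  unfolding chainRY_def by (simp add: foldr_matrix_mult[of _ _ "Rm ** Xm (Yk p (Suc k))"])

lemma conj_Fm_power:
  assumes "3 \<le> p" "1 \<le> k" "k \<le> p - 2"
  shows "Xm Z ** ((-1) ^ (k - 1) *\<^sub>R mpow (Fm p) k) ** Xm Z
       = Xm (Zk p Z 1) ** chainRY p k ** Lm ** Xm (Zk p Z (k + 1))"
  using assms(2,3)
proof (induction k rule: dec_induct)
  case base
  show ?case
    using conj_Fm_base[OF assms(1)] by (simp add: chainRY_def numeral_2_eq_2)
next
  case (step k)
  have "Xm Z ** ((-1) ^ (Suc k - 1) *\<^sub>R mpow (Fm p) (Suc k)) ** Xm Z
      = (Xm Z ** ((-1) ^ (k - 1) *\<^sub>R mpow (Fm p) k) ** Xm Z) ** (Xm Z ** Fm p ** Xm Z)"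
    using step.hyps(1) by (simp del: mpow.simps add: sign_mpow_Suc_conj Xm_mult_Xm_self)
  also have "\<dots> = Xm (Zk p Z 1) ** chainRY p k
      ** (Lm ** Xm (Zk p Z (k + 1)) ** (Xm Z ** Fm p ** Xm Z))"
    using step by (simp add: matrix_mul_assoc)
  also have "\<dots> = Xm (Zk p Z 1) ** chainRY p k
      ** (Rm ** Xm (Yk p (k + 1)) ** Lm ** Xm (Zk p Z (k + 2)))"
    using step by (simp only: conj_Fm_step)
  also have "\<dots> = Xm (Zk p Z 1) ** chainRY p (Suc k) ** Lm ** Xm (Zk p Z (Suc k + 1))"
    using step.hyps(1) by (simp add: chainRY_Suc matrix_mul_assoc)
  finally show ?case .
qed

lemma conj_Fm_power_last:
  assumes "3 \<le> p"
  shows "Xm Z ** ((-1) ^ p *\<^sub>R mpow (Fm p) (p - 1)) ** Xm Z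
       = Xm (Zk p Z 1) ** chainRY p (p - 2) ** Rm ** Xm (Zk p Z p)"
proof -
  have "p - 1 = Suc (p - 2)" and "(-1::real) ^ p = (-1) ^ (p - 2)"
    using assms by (simp_all add: power_diff)
  then have "Xm Z ** ((-1) ^ p *\<^sub>R mpow (Fm p) (p - 1)) ** Xm Z
      = (Xm Z ** ((-1) ^ (p - 2 - 1) *\<^sub>R mpow (Fm p) (p - 2)) ** Xm Z) ** (Xm Z ** Fm p ** Xm Z)"
    using assms by (simp del: mpow.simps add: sign_mpow_Suc_conj Xm_mult_Xm_self)
  also have "\<dots> = Xm (Zk p Z 1) ** chainRY p (p - 2)
      ** (Lm ** Xm (Zk p Z (p - 1)) ** (Xm Z ** Fm p ** Xm Z))"
    using assms conj_Fm_power[OF assms, of "p - 2"]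
    by (simp add: matrix_mul_assoc Suc_diff_Suc numeral_2_eq_2)
  also have "\<dots> = Xm (Zk p Z 1) ** chainRY p (p - 2) ** Rm ** Xm (Zk p Z p)"
    unfolding conj_Fm_last[OF assms] by (simp add: matrix_mul_assoc)
  finally show ?thesis .
qed

theorem mainTheorem3:
  fixes p :: nat and Z :: real
  assumes "p \<ge> 3"
  shows "Xm Z ** Fm p ** Xm Z = Xm (Zk p Z 1) ** Lm ** Xm (Zk p Z 2)
    \<and> (\<forall>k. 2 \<le> k \<and> k \<le> p - 2 \<longrightarrow>
           Xm Z ** (((-1::real) ^ (k - 1)) *\<^sub>R mpow (Fm p) k) ** Xm Z
             = Xm (Zk p Z 1) ** chainRY p k ** Lm ** Xm (Zk p Z (k + 1)))
    \<and> Xm Z ** (((-1::real) ^ p) *\<^sub>R mpow (Fm p) (p - 1)) ** Xm Z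
           = Xm (Zk p Z 1) ** chainRY p (p - 2) ** Rm ** Xm (Zk p Z p)"
  using conj_Fm_base[OF assms] conj_Fm_power[OF assms] conj_Fm_power_last[OF assms] by simp

end
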